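(* Let $q=p^r\ge 3$ and let $h,\bar h,t\in\mathbb{F}_q[x]$ be $$h(x)=\sum_{k=0}^{q-3}(k+1)x^k,\qquad \bar h(x)=1+x+\sum_{k=0}^{q-2}(-k)x^k,\qquad t(x)=x+\sum_{k=0}^{q-2}x^k .$$ Then: (1) $h(x^{q-2})\equiv \bar h(x) \pmod{x^q-x}$; (2) $\bar h(t(x))\equiv \bar h(x)\pmod{x^q-x}$.
   Context: $\mathbb{F}_q$ is the finite field with $q=p^r$ elements, $p$ prime. The integer coefficients $k+1$ and $-k$ are read in $\mathbb{F}_q$. Congruence modulo $x^q-x$ means the two polynomials induce the same function $\mathbb{F}_q\to\mathbb{F}_q$. *)

theory Defs
  imports "HOL-Computational_Algebra.Polynomial"
begin

definition h_poly :: "'a::{finite,field} poly" where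
  "h_poly = (\<Sum>k = 0..card (UNIV :: 'a set) - 3. monom (of_nat (k + 1)) k)"

definition hbar_poly :: "'a::{finite,field} poly" where
  "hbar_poly = 1 + [:0, 1:] + (\<Sum>k = 0..card (UNIV :: 'a set) - 2. monom (- of_nat k) k)"

definition t_poly :: "'a::{finite,field} poly" where
  "t_poly = [:0, 1:] + (\<Sum>k = 0..card (UNIV :: 'a set) - 2. monom 1 k)"

text \<open>Congruence modulo x^q - x: the two polynomials induce the same function on the field.\<close>
definition cong_xq :: "'a::{finite,field} poly \<Rightarrow> 'a poly \<Rightarrow> bool" where
  "cong_xq f g \<longleftrightarrow> (\<forall>a::'a. poly f a = poly g a)"

end

theory Submission
  imports Defs
begin

text \<open>
  Put \<open>n = q - 1\<close>. For \<open>x \<notin> {0, 1}\<close> we have \<open>x\<^sup>n = 1\<close>, hence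
  \<open>\<Sum>k<n. x\<^sup>k = 0\<close> and \<open>\<Sum>k<n. k x\<^sup>k = 1 / (1 - x)\<close>. This evaluates the three
  polynomials pointwise: \<open>hbar(x) = x\<^sup>2 / (x - 1)\<close> and \<open>h(y) = 1 / (y (1 - y))\<close> off \<open>{0, 1}\<close>,
  where \<open>t\<close> is the identity, while \<open>t\<close> swaps \<open>0\<close> and \<open>1\<close> and \<open>hbar\<close>, \<open>h\<close> take the value \<open>1\<close>
  there. Both congruences then follow from \<open>x ^ (q - 2) = 1 / x\<close>.
  The delicate value is \<open>hbar(1) = 2 - \<Sum>k<n. k\<close>, which equals \<open>1\<close> because
  \<open>\<Sum>k<q. k = q (q - 1) / 2\<close> vanishes in \<open>\<bbbF>\<^sub>q\<close>; in characteristic 2 this needs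
  \<open>4 dvd q\<close>, which holds since \<open>{0, 1, a, a + 1}\<close> is then an additive subgroup.
\<close>

lemma of_nat_card_eq_0: "of_nat (card (UNIV :: 'a set)) = (0 :: 'a :: {finite,ring_1})"
proof -
  have "(\<Sum>x\<in>UNIV. x + 1) = (\<Sum>x\<in>UNIV. x :: 'a)"
    by (rule sum.reindex_bij_witness[of _ "\<lambda>x. x - 1" "\<lambda>x. x + 1"]) auto
  then show ?thesis
    by (simp add: sum.distrib)
qed

lemma power_card_minus_one_eq_1:
  fixes x :: "'a :: {finite,field}"
  assumes "x \<noteq> 0"
  shows "x ^ (card (UNIV :: 'a set) - 1) = 1"
proof -
  have "(\<Prod>y\<in>UNIV-{0}. x * y) = (\<Prod>y\<in>UNIV-{0}. y)"
    by (rule prod.reindex_bij_witness[of _ "\<lambda>y. y / x" "\<lambda>y. x * y"]) (use assms in auto)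
  moreover have "card (UNIV - {0 :: 'a}) = card (UNIV :: 'a set) - 1"
    by (simp add: card_Diff_subset)
  ultimately show ?thesis
    by (simp add: prod.distrib)
qed

lemma card_add_subgroup_dvd_card:
  fixes H :: "'a :: {finite,ab_group_add} set"
  assumes "0 \<in> H"
    and add_closed: "\<And>u v. u \<in> H \<Longrightarrow> v \<in> H \<Longrightarrow> u + v \<in> H"
    and uminus_closed: "\<And>u. u \<in> H \<Longrightarrow> - u \<in> H"
  shows "card H dvd card (UNIV :: 'a set)"
proof -
  define coset where "coset x = (+) x ` H" for x :: 'a
  have coset_subset: "coset x \<subseteq> coset y" if "x - y \<in> H" for x y
  proof
    fix w assume "w \<in> coset x"
    then obtain u where "u \<in> H" "w = x + u" by (auto simp: coset_def)
    then have "w = y + ((x - y) + u)" "(x - y) + u \<in> H"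
      using add_closed that by simp_all
    then show "w \<in> coset y" unfolding coset_def by blast
  qed
  have coset_eq: "coset x = coset y" if z: "z \<in> coset x" "z \<in> coset y" for x y z
  proof -
    obtain u v where "u \<in> H" "v \<in> H" "z = x + u" "z = y + v"
      using z unfolding coset_def by blast
    then have "x - y = v + - u" "y - x = u + - v"
      by (simp_all add: algebra_simps)
    then show ?thesis
      using coset_subset add_closed uminus_closed \<open>u \<in> H\<close> \<open>v \<in> H\<close> by (metis subset_antisym)
  qed
  have "card H * card (range coset) = card (\<Union>(range coset))"
  proof (rule card_partition)
    show "c1 \<inter> c2 = {}" if "c1 \<in> range coset" "c2 \<in> range coset" "c1 \<noteq> c2" for c1 c2
      using that coset_eq by blast
  qed (auto simp: coset_def card_image)
  moreover have "\<Union>(range coset) = UNIV"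
    using \<open>0 \<in> H\<close> by (force simp: coset_def)
  ultimately show ?thesis by (metis dvd_triv_left)
qed

lemma four_dvd_card_if_char_2:
  assumes "(2 :: 'a :: {finite,field}) = 0" and "card (UNIV :: 'a set) \<ge> 3"
  shows "4 dvd card (UNIV :: 'a set)"
proof -
  have double_eq_0: "x + x = 0" for x :: 'a
    using assms(1) by (metis mult_2 mult_zero_left)
  then have double_cancel: "x + (x + y) = y" for x y :: 'a
    by (metis add.assoc add_0)
  have uminus_eq: "- x = x" for x :: 'a
    using double_eq_0 by (simp add: minus_unique)
  obtain a :: 'a where a: "a \<noteq> 0" "a \<noteq> 1"
  proof -
    have "\<not> UNIV \<subseteq> {0 :: 'a, 1}"
      using assms(2) card_mono[of "{0 :: 'a, 1}" UNIV] by (auto simp: card_insert_if)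
    then show ?thesis using that by blast
  qed
  define H where "H = {0, 1, a, a + 1}"
  have "a + 1 \<noteq> 0"
    using a(2) double_cancel[of a 1] by (metis add.commute add_0)
  then have "card H = 4"
    using a by (auto simp: H_def card_insert_if)
  moreover have "u + v \<in> H" if "u \<in> H" "v \<in> H" for u v
    using that by (auto simp: H_def add_ac double_eq_0 double_cancel)
  ultimately show ?thesis
    using card_add_subgroup_dvd_card[of H] uminus_eq by (simp add: H_def)
qed

lemma sum_of_nat_below_card_eq_0:
  assumes "card (UNIV :: 'a :: {finite,field} set) \<ge> 3"
  shows "(\<Sum>k<card (UNIV :: 'a set). of_nat k) = (0 :: 'a)"
proof (cases "(2 :: 'a) = 0")
  case True
  then obtain j where q: "card (UNIV :: 'a set) = 4 * j" "j > 0"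
    using four_dvd_card_if_char_2 assms by fastforce
  have "(\<Sum>k<4 * j. k) = 2 * ((4 * j - 1) * j)"
    using gauss_sum_nat[of "4 * j - 1"] q(2) by (simp add: atLeast0AtMost lessThan_Suc_atMost[symmetric])
  then show ?thesis
    using True by (simp add: q flip: of_nat_sum)
next
  case False
  have "2 * (\<Sum>k<card (UNIV :: 'a set). of_nat k) =
      of_nat (card (UNIV :: 'a set) - 1) * (of_nat (card (UNIV :: 'a set)) :: 'a)"
    using double_gauss_sum[where 'a = 'a, of "card (UNIV :: 'a set) - 1"] assms
    by (simp add: atLeast0AtMost lessThan_Suc_atMost[symmetric] of_nat_diff)
  also have "\<dots> = 0"
    by (simp add: of_nat_card_eq_0)
  finally show ?thesis using False by simp
qed

lemma of_nat_card_minus_one: "of_nat (card (UNIV :: 'a set) - 1) = (- 1 :: 'a :: {finite,field})"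
  using of_nat_card_eq_0[where 'a = 'a] finite_UNIV_card_ge_0[where 'a = 'a]
  by (simp add: of_nat_diff)

lemma sum_powers_below_card_minus_one:
  fixes x :: "'a :: {finite,field}"
  assumes "card (UNIV :: 'a set) \<ge> 3"
  shows "(\<Sum>k<card (UNIV :: 'a set) - 1. x ^ k) = (if x = 0 then 1 else if x = 1 then - 1 else 0)"
proof -
  have "(\<Sum>k<card (UNIV :: 'a set) - 1. 0 ^ k) = (1 :: 'a)"
    using assms by (simp add: power_0_left)
  then show ?thesis
    using power_card_minus_one_eq_1[of x] of_nat_card_minus_one[where 'a = 'a]
    by (simp add: sum_gp_strict)
qed

lemma diff_one_mult_sum_of_nat_mult_power:
  fixes x :: "'a :: comm_ring_1"
  shows "(x - 1) * (\<Sum>k<n. of_nat k * x ^ k) = of_nat n * x ^ n - x * (\<Sum>k<n. x ^ k)"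
  by (induction n) (simp_all add: algebra_simps)

lemma sum_of_nat_mult_powers_below_card_minus_one:
  fixes x :: "'a :: {finite,field}"
  assumes "card (UNIV :: 'a set) \<ge> 3"
  shows "(\<Sum>k<card (UNIV :: 'a set) - 1. of_nat k * x ^ k) =
    (if x = 0 then 0 else if x = 1 then 1 else 1 / (1 - x))"
proof -
  consider "x = 0" | "x = 1" | "x \<noteq> 0" "x \<noteq> 1" by blast
  then show ?thesis
  proof cases
    case 1
    then show ?thesis by (auto intro!: sum.neutral simp: power_0_left)
  next
    case 2
    have "card (UNIV :: 'a set) = Suc (card (UNIV :: 'a set) - 1)"
      using assms by simp
    then have "(\<Sum>k<card (UNIV :: 'a set). of_nat k) =
        (\<Sum>k<card (UNIV :: 'a set) - 1. of_nat k) + (of_nat (card (UNIV :: 'a set) - 1) :: 'a)"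
      by (metis sum.lessThan_Suc)
    then show ?thesis
      using 2 sum_of_nat_below_card_eq_0[OF assms] of_nat_card_minus_one[where 'a = 'a] by simp
  next
    case 3
    have "(x - 1) * (\<Sum>k<card (UNIV :: 'a set) - 1. of_nat k * x ^ k) = - 1"
      using 3 sum_powers_below_card_minus_one[OF assms, of x] power_card_minus_one_eq_1[of x]
        of_nat_card_minus_one[where 'a = 'a]
      by (simp add: diff_one_mult_sum_of_nat_mult_power)
    then show ?thesis
      using 3 by (simp add: field_simps)
  qed
qed

lemma poly_hbar_poly:
  assumes "card (UNIV :: 'a :: {finite,field} set) \<ge> 3"
  shows "poly (hbar_poly :: 'a poly) x = (if x = 0 \<or> x = 1 then 1 else x\<^sup>2 / (x - 1))"
proof -
  have "{0..card (UNIV :: 'a set) - 2} = {..<card (UNIV :: 'a set) - 1}"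
    using assms by auto
  then have "poly hbar_poly x = 1 + x - (\<Sum>k<card (UNIV :: 'a set) - 1. of_nat k * x ^ k)"
    by (simp add: hbar_poly_def poly_sum poly_monom sum_negf)
  also have "\<dots> = 1 + x - (if x = 0 then 0 else if x = 1 then 1 else 1 / (1 - x))"
    by (simp only: sum_of_nat_mult_powers_below_card_minus_one[OF assms])
  also have "\<dots> = (if x = 0 \<or> x = 1 then 1 else x\<^sup>2 / (x - 1))"
  proof (cases "x = 0 \<or> x = 1")
    case False
    then have "1 - x \<noteq> 0" "x - 1 \<noteq> 0" by simp_all
    with False show ?thesis by (simp add: field_simps power2_eq_square)
  qed auto
  finally show ?thesis .
qed

lemma poly_t_poly:
  assumes "card (UNIV :: 'a :: {finite,field} set) \<ge> 3"
  shows "poly (t_poly :: 'a poly) x = (if x = 0 then 1 else if x = 1 then 0 else x)"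
proof -
  have "{0..card (UNIV :: 'a set) - 2} = {..<card (UNIV :: 'a set) - 1}"
    using assms by auto
  then show ?thesis
    using sum_powers_below_card_minus_one[OF assms, of x] by (simp add: t_poly_def poly_sum poly_monom)
qed

lemma poly_h_poly:
  assumes "card (UNIV :: 'a :: {finite,field} set) \<ge> 3"
  shows "poly (h_poly :: 'a poly) y = (if y = 0 \<or> y = 1 then 1 else 1 / (y * (1 - y)))"
proof -
  define n where "n = card (UNIV :: 'a set) - 3"
  have card: "card (UNIV :: 'a set) - 1 = Suc (Suc n)" "card (UNIV :: 'a set) - 3 = n"
    using assms by (simp_all add: n_def)
  have h: "poly h_poly y = (\<Sum>k<Suc n. of_nat (Suc k) * y ^ k)" for y :: 'a
    by (simp add: h_poly_def poly_sum poly_monom card atLeast0AtMost lessThan_Suc_atMost)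
  have "y * poly h_poly y = (\<Sum>k<card (UNIV :: 'a set) - 1. of_nat k * y ^ k)"
    unfolding h card by (simp add: sum.lessThan_Suc_shift sum_distrib_left algebra_simps del: sum.lessThan_Suc)
  moreover have "poly h_poly 0 = (1 :: 'a)"
    unfolding h by (simp add: sum.lessThan_Suc_shift del: sum.lessThan_Suc)
  ultimately show ?thesis
    using sum_of_nat_mult_powers_below_card_minus_one[OF assms, of y] by (auto simp: field_simps)
qed

lemma power_card_minus_two_eq_inverse:
  fixes x :: "'a :: {finite,field}"
  assumes "card (UNIV :: 'a set) \<ge> 3"
  shows "x ^ (card (UNIV :: 'a set) - 2) = inverse x"
proof (cases "x = 0")
  case False
  have "x ^ (card (UNIV :: 'a set) - 2) * x = x ^ (card (UNIV :: 'a set) - 1)"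
    using assms by (simp flip: power_Suc2 add: Suc_diff_Suc numeral_2_eq_2)
  then show ?thesis
    using False power_card_minus_one_eq_1[OF False] by (simp add: field_simps)
qed (use assms in simp)

theorem mainTheorem1:
  assumes "card (UNIV :: 'a::{finite,field} set) \<ge> 3"
  shows "cong_xq (pcompose (h_poly :: 'a poly) (monom 1 (card (UNIV :: 'a set) - 2))) hbar_poly \<and>
         cong_xq (pcompose (hbar_poly :: 'a poly) t_poly) hbar_poly"
proof -
  have "poly h_poly (x ^ (card (UNIV :: 'a set) - 2)) = poly hbar_poly x" for x :: 'a
    using assms by (simp add: power_card_minus_two_eq_inverse poly_h_poly poly_hbar_poly field_simps power2_eq_square)
  moreover have "poly hbar_poly (poly t_poly x) = poly (hbar_poly :: 'a poly) x" for x :: 'a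
    using assms by (simp add: poly_t_poly poly_hbar_poly)
  ultimately show ?thesis
    by (simp add: cong_xq_def poly_pcompose poly_monom)
qed

end
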